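(* Let $p$ be an odd prime and $\chi$ a primitive Dirichlet character with odd conductor $f$. For every integer $n\ge0$, in $\mathbb Q_p(\chi)$, $$E_{n,\chi}=\lim_{N\to\infty}\sum_{a=1}^{fp^N}(-1)^a\chi(a)a^n .$$
   Context: We set $\chi(a)=0$ if $a$ is not prime to $f$. The generalized Euler numbers are defined by $2\sum_{a=1}^{f}\frac{(-1)^a\chi(a)e^{at}}{e^{ft}+1}=\sum_{n\ge0}E_{n,\chi}\frac{t^n}{n!}$; they lie in $\mathbb Q(\chi)$, viewed inside $\mathbb Q_p(\chi)$, the field generated over $\mathbb Q_p$ by the values of $\chi$. The limit is in the $p$-adic topology. *)

theory Defs
  imports Complex_Main "HOL-Computational_Algebra.Computational_Algebra"
begin

definition dirichlet_char :: "nat \<Rightarrow> (nat \<Rightarrow> complex) \<Rightarrow> bool" where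
  "dirichlet_char f \<chi> \<longleftrightarrow> f > 0 \<and>
     (\<forall>a. \<chi> (a + f) = \<chi> a) \<and>
     (\<forall>a b. \<chi> (a * b) = \<chi> a * \<chi> b) \<and>
     \<chi> 1 = 1 \<and>
     (\<forall>a. \<chi> a = 0 \<longleftrightarrow> \<not> coprime a f)"

text \<open>Primitive: not induced from any proper divisor d of f, i.e. for each proper
  divisor d there is a unit a mod f with a = 1 mod d and chi(a) different from 1.\<close>
definition primitive_dirichlet_char :: "nat \<Rightarrow> (nat \<Rightarrow> complex) \<Rightarrow> bool" where
  "primitive_dirichlet_char f \<chi> \<longleftrightarrow> dirichlet_char f \<chi> \<and>
     (\<forall>d. d dvd f \<and> d < f \<longrightarrow>
        (\<exists>a. coprime a f \<and> a mod d = 1 mod d \<and> \<chi> a \<noteq> 1))"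

definition gen_euler :: "nat \<Rightarrow> (nat \<Rightarrow> complex) \<Rightarrow> nat \<Rightarrow> complex" where
  "gen_euler f \<chi> n = fact n * fps_nth
     (2 * (\<Sum>a=1..f. fps_const ((-1) ^ a * \<chi> a) * fps_exp (of_nat a))
        / (fps_exp (of_nat f) + 1)) n"

text \<open>x is p-integral: root of a monic polynomial whose coefficients are rationals
  with denominator prime to p (i.e. nonnegative valuation at every prime above p).\<close>
definition p_integral :: "nat \<Rightarrow> complex \<Rightarrow> bool" where
  "p_integral p x \<longleftrightarrow> (\<exists>P :: complex poly. lead_coeff P = 1 \<and> poly P x = 0 \<and>
     (\<forall>i. \<exists>r :: rat. coeff P i = of_rat r \<and> coprime (snd (quotient_of r)) (int p)))"

definition padic_tendsto :: "nat \<Rightarrow> (nat \<Rightarrow> complex) \<Rightarrow> complex \<Rightarrow> bool" where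
  "padic_tendsto p S L \<longleftrightarrow>
     (\<forall>k::nat. \<exists>N0. \<forall>N\<ge>N0. p_integral p ((S N - L) / of_nat p ^ k))"

end

theory Submission
  imports Defs "Jordan_Normal_Form.Char_Poly" "HOL-Number_Theory.Residues"
begin

text \<open>Let \<open>A_M(t) = \<Sum>_{a=1}^M (-1)^a \<chi>(a) e^{at}\<close> and \<open>S_M(n) = \<Sum>_{a=1}^M (-1)^a \<chi>(a) a^n\<close>.
  For odd \<open>m\<close>, periodicity of \<open>\<chi>\<close> and oddness of \<open>f\<close> turn \<open>A_{fm}\<close> into \<open>A_f\<close> times a geometric
  series in \<open>-e^{ft}\<close>, whence \<open>A_{fm}(t) (e^{ft} + 1) = A_f(t) (e^{fmt} + 1)\<close>: the generating function
  \<open>2 A_f(t) / (e^{ft} + 1)\<close> of the \<open>E_{n,\<chi>}\<close> may be written with \<open>fm\<close> in place of \<open>f\<close>.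
  Comparing coefficients of \<open>t^n\<close> gives
  \<open>S_{fm}(n) - E_{n,\<chi>} = fm \<Sum>_{i<n} C(n,i) (fm)^{n-i-1} E_{i,\<chi>} / 2\<close>.
  For \<open>m = 1\<close> this shows inductively that every \<open>E_{i,\<chi>}\<close> lies in \<open>\<int>[\<zeta>]\<close> localised at \<open>p\<close>,
  where \<open>\<zeta>\<close> is a primitive \<open>\<phi>(f)\<close>-th root of unity; for \<open>m = p^N\<close> it then shows that
  \<open>(S_{fp^N}(n) - E_{n,\<chi>}) / p^k\<close> lies in that ring when \<open>k \<le> N\<close>. Elements of this ring are
  \<open>p\<close>-integral because \<open>Q(\<zeta>)\<close> is an eigenvalue of the integer matrix of multiplication by \<open>Q\<close>
  on \<open>\<int>[X]/(X^m - 1)\<close>, hence an algebraic integer.\<close>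

section \<open>Integer polynomials in a root of unity\<close>

text \<open>Multiplication by \<open>Q\<close> on \<open>\<int>[X]/(X^m - 1)\<close> in the basis \<open>1, X, \<dots>, X^{m-1}\<close>.\<close>
definition cyclic_mult_mat :: "nat \<Rightarrow> int poly \<Rightarrow> int mat" where
  "cyclic_mult_mat m Q =
     mat m m (\<lambda>(k, l). \<Sum>i\<le>degree Q. if (i + k) mod m = l then Polynomial.coeff Q i else 0)"

lemma power_mod_root_of_unity:
  fixes \<zeta> :: "'a :: monoid_mult"
  assumes "\<zeta> ^ m = 1"
  shows "\<zeta> ^ j = \<zeta> ^ (j mod m)"
proof -
  have "\<zeta> ^ j = (\<zeta> ^ m) ^ (j div m) * \<zeta> ^ (j mod m)"
    by (simp flip: power_mult power_add)
  with assms show ?thesis by simp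
qed

lemma cyclic_mult_mat_eigenvector:
  fixes \<zeta> :: complex
  assumes "m > 0" and "\<zeta> ^ m = 1"
  defines "v \<equiv> vec m (\<lambda>k. \<zeta> ^ k)"
  shows "map_mat of_int (cyclic_mult_mat m Q) *\<^sub>v v = poly (map_poly of_int Q) \<zeta> \<cdot>\<^sub>v v"
proof (rule eq_vecI)
  fix k assume "k < dim_vec (poly (map_poly of_int Q) \<zeta> \<cdot>\<^sub>v v)"
  hence k: "k < m" by (simp add: v_def)
  let ?c = "\<lambda>i. of_int (Polynomial.coeff Q i) :: complex"
  have "(map_mat of_int (cyclic_mult_mat m Q) *\<^sub>v v) $ k
          = (\<Sum>l<m. map_mat of_int (cyclic_mult_mat m Q) $$ (k, l) * \<zeta> ^ l)"
    using k by (simp add: v_def mult_mat_vec_def scalar_prod_def lessThan_atLeast0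
        cyclic_mult_mat_def[of m Q])
  also have "\<dots> = (\<Sum>l<m. \<Sum>i\<le>degree Q. if (i + k) mod m = l then ?c i * \<zeta> ^ l else 0)"
    using k by (simp add: cyclic_mult_mat_def sum_distrib_right of_int_sum; intro sum.cong refl; simp)
  also have "\<dots> = (\<Sum>i\<le>degree Q. \<Sum>l<m. if (i + k) mod m = l then ?c i * \<zeta> ^ l else 0)"
    by (rule sum.swap)
  also have "\<dots> = (\<Sum>i\<le>degree Q. ?c i * \<zeta> ^ ((i + k) mod m))"
    using assms(1) by (simp add: sum.delta)
  also have "\<dots> = (\<Sum>i\<le>degree Q. ?c i * \<zeta> ^ i) * \<zeta> ^ k"
    by (simp add: sum_distrib_right power_mod_root_of_unity[OF assms(2), symmetric] power_add
        mult.assoc)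
  also have "\<dots> = (poly (map_poly of_int Q) \<zeta> \<cdot>\<^sub>v v) $ k"
    using k by (simp add: poly_altdef v_def)
  finally show "(map_mat of_int (cyclic_mult_mat m Q) *\<^sub>v v) $ k
                 = (poly (map_poly of_int Q) \<zeta> \<cdot>\<^sub>v v) $ k" .
qed (simp add: cyclic_mult_mat_def v_def)

lemma algebraic_int_poly_root_of_unity:
  fixes \<zeta> :: complex
  assumes "m > 0" and "\<zeta> ^ m = 1"
  shows "algebraic_int (poly (map_poly of_int Q) \<zeta>)"
proof -
  define A where "A = cyclic_mult_mat m Q"
  have A: "A \<in> carrier_mat m m" by (simp add: A_def cyclic_mult_mat_def)
  have "vec m (\<lambda>k. \<zeta> ^ k) $ 0 \<noteq> 0\<^sub>v m $ 0"
    using assms(1) by simp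
  hence "vec m (\<lambda>k. \<zeta> ^ k) \<noteq> 0\<^sub>v m"
    by metis
  hence "eigenvector (map_mat of_int A) (vec m (\<lambda>k. \<zeta> ^ k)) (poly (map_poly of_int Q) \<zeta>)"
    using A cyclic_mult_mat_eigenvector[OF assms] by (simp add: eigenvector_def A_def)
  hence "poly (char_poly (map_mat of_int A)) (poly (map_poly of_int Q) \<zeta>) = 0"
    using A eigenvalue_root_char_poly[of "map_mat of_int A"] by (auto simp: eigenvalue_def)
  hence "poly (map_poly of_int (char_poly A)) (poly (map_poly of_int Q) \<zeta>) = 0"
    by (simp add: of_int_hom.char_poly_hom[OF A])
  moreover have "lead_coeff (char_poly A) = 1"
    using degree_monic_char_poly[OF A] by simp
  ultimately show ?thesis
    unfolding algebraic_int_altdef_ipoly by blast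
qed

lemma coprime_denom_quotient_of:
  fixes r :: rat and b c q :: int
  assumes "r * of_int b = of_int c" and "coprime b q"
  shows "coprime (snd (quotient_of r)) q"
proof -
  obtain n d where nd: "quotient_of r = (n, d)" by (cases "quotient_of r")
  have "d > 0" and "coprime n d" and r: "r = of_int n / of_int d"
    using quotient_of_denom_pos[OF nd] quotient_of_coprime[OF nd] quotient_of_div[OF nd] by auto
  hence "of_int (n * b) = (of_int (c * d) :: rat)"
    using assms(1) unfolding r by (simp add: field_simps)
  hence "n * b = c * d"
    by (simp only: of_int_eq_iff)
  hence "d dvd b"
    using \<open>coprime n d\<close> by (metis coprime_commute coprime_dvd_mult_right_iff dvd_triv_right)
  thus ?thesis
    using assms(2) nd by (auto intro: coprime_divisors)
qed

lemma p_integral_algebraic_int_divide: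
  fixes y :: complex
  assumes "algebraic_int y" and "D > 0" and "coprime D p"
  shows "p_integral p (y / of_nat D)"
proof -
  obtain P where P: "poly (map_poly of_int P) y = 0" "lead_coeff P = 1"
    using assms(1) unfolding algebraic_int_altdef_ipoly by blast
  define d where "d = degree P"
  define R :: "complex poly" where
    "R = Polynomial.smult (1 / of_nat D ^ d) (pcompose (map_poly of_int P) [:0, of_nat D:])"
  define c where "c i = rat_of_int (Polynomial.coeff P i * int D ^ i) / rat_of_int (int D ^ d)" for i
  have coeff_R: "Polynomial.coeff R i = of_rat (c i)" for i
    by (simp add: R_def c_def coeff_pcompose_linear of_rat_divide of_rat_mult of_rat_power mult_ac)
  have "degree R = d"
    using assms(2) by (simp add: R_def degree_pcompose d_def)
  hence "lead_coeff R = 1"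
    using assms(2) P(2) by (simp add: coeff_R c_def d_def)
  moreover have "poly R (y / of_nat D) = 0"
    using assms(2) P(1) by (simp add: R_def poly_pcompose)
  moreover have "coprime (snd (quotient_of (c i))) (int p)" for i
    using assms(2,3)
    by (intro coprime_denom_quotient_of[of _ "int D ^ d" "Polynomial.coeff P i * int D ^ i"])
       (auto simp: c_def)
  ultimately show ?thesis
    unfolding p_integral_def using coeff_R by blast
qed

section \<open>The ring \<open>\<int>[\<zeta>]\<close> localised at \<open>p\<close>\<close>

definition p_local_poly_value :: "nat \<Rightarrow> complex \<Rightarrow> complex \<Rightarrow> bool" where
  "p_local_poly_value p \<zeta> x \<longleftrightarrow>
     (\<exists>Q D. D > 0 \<and> coprime D p \<and> x = poly (map_poly of_int Q) \<zeta> / of_nat D)"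

lemma p_local_poly_value_imp_p_integral:
  assumes "m > 0" and "\<zeta> ^ m = 1" and "p_local_poly_value p \<zeta> x"
  shows "p_integral p x"
proof -
  obtain Q D where "D > 0" and "coprime D p" and "x = poly (map_poly of_int Q) \<zeta> / of_nat D"
    using assms(3) unfolding p_local_poly_value_def by blast
  thus ?thesis
    using p_integral_algebraic_int_divide algebraic_int_poly_root_of_unity[OF assms(1,2)] by simp
qed

lemma p_local_poly_value_of_int [simp]: "p_local_poly_value p \<zeta> (of_int c)"
  unfolding p_local_poly_value_def
  by (intro exI[of _ "[:c:]"] exI[of _ 1]) (cases "c = 0"; simp add: map_poly_pCons)

lemma p_local_poly_value_of_nat [simp]: "p_local_poly_value p \<zeta> (of_nat c)"
  using p_local_poly_value_of_int[of p \<zeta> "int c"] by simp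

lemma p_local_poly_value_0 [simp]: "p_local_poly_value p \<zeta> 0"
  and p_local_poly_value_1 [simp]: "p_local_poly_value p \<zeta> 1"
  using p_local_poly_value_of_nat[of p \<zeta> 0] p_local_poly_value_of_nat[of p \<zeta> 1] by simp_all

lemma p_local_poly_value_power_base [simp]: "p_local_poly_value p \<zeta> (\<zeta> ^ e)"
  unfolding p_local_poly_value_def
  by (intro exI[of _ "Polynomial.monom 1 e"] exI[of _ 1]) (simp add: poly_monom)

lemma p_local_poly_value_add [intro]:
  assumes "p_local_poly_value p \<zeta> x" and "p_local_poly_value p \<zeta> y"
  shows "p_local_poly_value p \<zeta> (x + y)"
proof -
  obtain Q1 D1 where 1: "D1 > 0" "coprime D1 p" "x = poly (map_poly of_int Q1) \<zeta> / of_nat D1"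
    using assms(1) unfolding p_local_poly_value_def by blast
  obtain Q2 D2 where 2: "D2 > 0" "coprime D2 p" "y = poly (map_poly of_int Q2) \<zeta> / of_nat D2"
    using assms(2) unfolding p_local_poly_value_def by blast
  define Q where "Q = Polynomial.smult (int D2) Q1 + Polynomial.smult (int D1) Q2"
  have "x + y = poly (map_poly of_int Q) \<zeta> / of_nat (D1 * D2)"
    using 1 2 by (simp add: Q_def hom_distribs field_simps)
  thus ?thesis
    unfolding p_local_poly_value_def using 1 2 by (intro exI[of _ Q] exI[of _ "D1 * D2"]) auto
qed

lemma p_local_poly_value_mult [intro]:
  assumes "p_local_poly_value p \<zeta> x" and "p_local_poly_value p \<zeta> y"
  shows "p_local_poly_value p \<zeta> (x * y)"
proof -
  obtain Q1 D1 where 1: "D1 > 0" "coprime D1 p" "x = poly (map_poly of_int Q1) \<zeta> / of_nat D1"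
    using assms(1) unfolding p_local_poly_value_def by blast
  obtain Q2 D2 where 2: "D2 > 0" "coprime D2 p" "y = poly (map_poly of_int Q2) \<zeta> / of_nat D2"
    using assms(2) unfolding p_local_poly_value_def by blast
  have "x * y = poly (map_poly of_int (Q1 * Q2)) \<zeta> / of_nat (D1 * D2)"
    using 1 2 by (simp add: hom_distribs)
  thus ?thesis
    unfolding p_local_poly_value_def using 1 2 by (intro exI[of _ "Q1 * Q2"] exI[of _ "D1 * D2"]) auto
qed

lemma p_local_poly_value_divide:
  assumes "p_local_poly_value p \<zeta> x" and "D > 0" and "coprime D p"
  shows "p_local_poly_value p \<zeta> (x / of_nat D)"
proof -
  obtain Q E where E: "E > 0" "coprime E p" "x = poly (map_poly of_int Q) \<zeta> / of_nat E"
    using assms(1) unfolding p_local_poly_value_def by blast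
  hence "x / of_nat D = poly (map_poly of_int Q) \<zeta> / of_nat (E * D)"
    by simp
  thus ?thesis
    unfolding p_local_poly_value_def using E assms(2,3) by (intro exI[of _ Q] exI[of _ "E * D"]) auto
qed

lemma p_local_poly_value_half:
  assumes "odd p" and "p_local_poly_value p \<zeta> x"
  shows "p_local_poly_value p \<zeta> (x / 2)"
  using p_local_poly_value_divide[OF assms(2), of 2] assms(1) by simp

lemma p_local_poly_value_uminus [intro]:
  "p_local_poly_value p \<zeta> x \<Longrightarrow> p_local_poly_value p \<zeta> (- x)"
  using p_local_poly_value_mult[OF p_local_poly_value_of_int[of p \<zeta> "-1"]] by simp

lemma p_local_poly_value_diff [intro]:
  "p_local_poly_value p \<zeta> x \<Longrightarrow> p_local_poly_value p \<zeta> y \<Longrightarrow> p_local_poly_value p \<zeta> (x - y)"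
  using p_local_poly_value_add[of p \<zeta> x "- y"] by auto

lemma p_local_poly_value_power [intro]:
  "p_local_poly_value p \<zeta> x \<Longrightarrow> p_local_poly_value p \<zeta> (x ^ k)"
  by (induction k) auto

lemma p_local_poly_value_sum [intro]:
  "(\<And>i. i \<in> A \<Longrightarrow> p_local_poly_value p \<zeta> (g i)) \<Longrightarrow> p_local_poly_value p \<zeta> (\<Sum>i\<in>A. g i)"
  by (induction A rule: infinite_finite_induct) auto

section \<open>Dirichlet characters\<close>

lemma periodic_add_mult:
  fixes g :: "nat \<Rightarrow> 'a" and f :: nat
  assumes "\<And>a. g (a + f) = g a"
  shows "g (b + f * k) = g b"
proof (induction k)
  case (Suc k)
  have "g (b + f * Suc k) = g (b + f * k + f)"
    by (simp add: algebra_simps)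
  with Suc assms show ?case by simp
qed simp

lemma periodic_mod:
  fixes g :: "nat \<Rightarrow> 'a" and f :: nat
  assumes "\<And>a. g (a + f) = g a"
  shows "g x = g (x mod f)"
  using periodic_add_mult[of g f "x mod f" "x div f", OF assms] by (simp add: add.commute)

lemma dirichlet_char_periodic:
  "dirichlet_char f \<chi> \<Longrightarrow> \<chi> (a + f) = \<chi> a"
  unfolding dirichlet_char_def by blast

lemma dirichlet_char_power:
  assumes "dirichlet_char f \<chi>"
  shows "\<chi> (x ^ k) = \<chi> x ^ k"
proof -
  have "\<chi> (a * b) = \<chi> a * \<chi> b" and "\<chi> 1 = 1" for a b
    using assms unfolding dirichlet_char_def by blast+
  thus ?thesis by (induction k) simp_all
qed

lemma dirichlet_char_power_totient:
  assumes "dirichlet_char f \<chi>" and "coprime x f"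
  shows "\<chi> x ^ totient f = 1"
proof -
  have "(x ^ totient f) mod f = 1 mod f"
    using euler_theorem[OF assms(2)] unfolding cong_def .
  hence "\<chi> (x ^ totient f) = \<chi> 1"
    using periodic_mod[of \<chi> f, OF dirichlet_char_periodic[OF assms(1)]] by metis
  thus ?thesis
    using assms(1) by (simp add: dirichlet_char_power[OF assms(1)] dirichlet_char_def)
qed

lemma root_of_unity_eq_cis_power:
  assumes "m > 0" and "z ^ m = 1"
  obtains e where "z = cis (2 * pi / real m) ^ e"
proof -
  obtain k where "z = cis (2 * pi * real k / real m)"
    using assms bij_betw_roots_unity[OF assms(1)] unfolding bij_betw_def by auto
  thus ?thesis
    using that[of k] by (simp add: DeMoivre mult.commute)
qed

lemma p_local_poly_value_dirichlet_char:
  assumes "dirichlet_char f \<chi>"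
  shows "p_local_poly_value p (cis (2 * pi / real (totient f))) (\<chi> x)"
proof (cases "coprime x f")
  case True
  have "totient f > 0"
    using assms unfolding dirichlet_char_def by simp
  then obtain e where "\<chi> x = cis (2 * pi / real (totient f)) ^ e"
    using root_of_unity_eq_cis_power dirichlet_char_power_totient[OF assms True] by blast
  thus ?thesis by simp
next
  case False
  hence "\<chi> x = 0"
    using assms unfolding dirichlet_char_def by blast
  thus ?thesis by simp
qed

section \<open>The generating function of the generalized Euler numbers\<close>

definition euler_exp_sum :: "(nat \<Rightarrow> complex) \<Rightarrow> nat \<Rightarrow> complex fps" where
  "euler_exp_sum \<chi> M = (\<Sum>a=1..M. fps_const ((-1) ^ a * \<chi> a) * fps_exp (of_nat a))"

lemma gen_euler_eq_fps_nth:
  "gen_euler f \<chi> n = fact n * (2 * euler_exp_sum \<chi> f / (fps_exp (of_nat f) + 1)) $ n"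
  unfolding gen_euler_def euler_exp_sum_def ..

lemma euler_exp_sum_mult:
  assumes periodic: "\<And>a. \<chi> (a + f) = \<chi> a" and "odd f"
  shows "euler_exp_sum \<chi> (f * m) = (\<Sum>j<m. (- fps_exp (of_nat f)) ^ j) * euler_exp_sum \<chi> f"
proof (induction m)
  case (Suc m)
  let ?t = "\<lambda>a. fps_const ((-1) ^ a * \<chi> a) * fps_exp (of_nat a :: complex)"
  have "euler_exp_sum \<chi> (f * Suc m) = euler_exp_sum \<chi> (f * m) + (\<Sum>a=1+f*m..f+f*m. ?t a)"
  proof -
    have "{f * m + 1..f * m + f} = {1 + f * m..f + f * m}"
      by (simp add: add.commute)
    thus ?thesis
      unfolding euler_exp_sum_def mult_Suc_right add.commute[of f]
      by (subst sum.ub_add_nat[of 1 "f * m"]) simp_all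
  qed
  also have "(\<Sum>a=1+f*m..f+f*m. ?t a) = (\<Sum>b=1..f. ?t (b + f * m))"
    by (rule sum.shift_bounds_cl_nat_ivl)
  also have "\<dots> = (\<Sum>b=1..f. (- fps_exp (of_nat f)) ^ m * ?t b)"
  proof (rule sum.cong[OF refl])
    fix b
    have "(-1) ^ (b + f * m) * \<chi> (b + f * m) = (-1) ^ m * ((-1) ^ b * \<chi> b)"
      using periodic_add_mult[of \<chi> f, OF periodic] \<open>odd f\<close>
      by (simp add: power_add power_mult power_minus_odd)
    moreover have "fps_exp (of_nat (b + f * m) :: complex) = fps_exp (of_nat b) * fps_exp (of_nat f) ^ m"
      by (simp add: fps_exp_add_mult fps_exp_power_mult mult.commute)
    ultimately show "?t (b + f * m) = (- fps_exp (of_nat f)) ^ m * ?t b"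
      by (simp add: power_minus' fps_const_mult[symmetric] fps_const_power[symmetric]
          fps_const_neg[symmetric] mult_ac)
  qed
  also have "\<dots> = (- fps_exp (of_nat f)) ^ m * euler_exp_sum \<chi> f"
    unfolding euler_exp_sum_def by (simp add: sum_distrib_left)
  finally show ?case
    using Suc by (simp add: algebra_simps)
qed (simp add: euler_exp_sum_def)

lemma euler_exp_sum_odd_mult:
  assumes "\<And>a. \<chi> (a + f) = \<chi> a" and "odd f" and "odd m"
  shows "euler_exp_sum \<chi> (f * m) * (fps_exp (of_nat f) + 1)
           = euler_exp_sum \<chi> f * (fps_exp (of_nat (f * m)) + 1)"
proof -
  define y :: "complex fps" where "y = - fps_exp (of_nat f)"
  have "(\<Sum>j<m. y ^ j) * (fps_exp (of_nat f) + 1) = 1 - y ^ m"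
    by (simp add: y_def one_diff_power_eq algebra_simps)
  also have "y ^ m = - fps_exp (of_nat (f * m))"
    using assms(3) by (simp add: y_def power_minus_odd fps_exp_power_mult mult.commute)
  finally show ?thesis
    unfolding euler_exp_sum_mult[of \<chi> f, OF assms(1,2)] y_def[symmetric] by (simp add: mult_ac)
qed

lemma gen_euler_fps_times_exp_plus_one:
  assumes "\<And>a. \<chi> (a + f) = \<chi> a" and "odd f" and "odd m"
  shows "(2 * euler_exp_sum \<chi> f / (fps_exp (of_nat f) + 1)) * (fps_exp (of_nat (f * m)) + 1)
           = 2 * euler_exp_sum \<chi> (f * m)"
proof -
  define U :: "complex fps" where "U = fps_exp (of_nat f) + 1"
  define G where "G = 2 * euler_exp_sum \<chi> f / U"
  have "U $ 0 = 2" by (simp add: U_def)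
  hence "U \<noteq> 0" and GU: "G * U = 2 * euler_exp_sum \<chi> f"
    by (auto simp: G_def fps_divide_unit mult.assoc inverse_mult_eq_1)
  have "(G * (fps_exp (of_nat (f * m)) + 1)) * U = G * U * (fps_exp (of_nat (f * m)) + 1)"
    by (simp only: mult_ac)
  also have "\<dots> = 2 * (euler_exp_sum \<chi> f * (fps_exp (of_nat (f * m)) + 1))"
    by (simp only: GU mult.assoc)
  also have "\<dots> = 2 * euler_exp_sum \<chi> (f * m) * U"
    by (simp only: euler_exp_sum_odd_mult[of \<chi> f, OF assms, symmetric] U_def mult.assoc)
  finally show ?thesis
    using \<open>U \<noteq> 0\<close> by (simp add: G_def U_def)
qed

lemma fact_times_fps_nth_mult_exp:
  fixes G :: "'a :: field_char_0 fps"
  shows "fact n * (G * fps_exp c) $ n = (\<Sum>i\<le>n. of_nat (n choose i) * c ^ (n - i) * (fact i * G $ i))"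
  unfolding fps_mult_nth sum_distrib_left atLeast0AtMost
proof (rule sum.cong[OF refl])
  fix i assume "i \<in> {..n}"
  hence "(of_nat (n choose i) :: 'a) = fact n / (fact i * fact (n - i))"
    by (simp add: binomial_fact)
  thus "fact n * (G $ i * (fps_exp c $ (n - i))) = of_nat (n choose i) * c ^ (n - i) * (fact i * G $ i)"
    by (simp add: field_simps)
qed

lemma fact_times_fps_nth_euler_exp_sum:
  "fact n * euler_exp_sum \<chi> M $ n = (\<Sum>a=1..M. (-1) ^ a * \<chi> a * of_nat a ^ n)"
  by (simp add: euler_exp_sum_def fps_sum_nth sum_distrib_left)

lemma gen_euler_recurrence:
  assumes "\<And>a. \<chi> (a + f) = \<chi> a" and "odd f" and "odd m"
  shows "2 * gen_euler f \<chi> n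
           + (\<Sum>i<n. of_nat (n choose i) * of_nat (f * m) ^ (n - i) * gen_euler f \<chi> i)
         = 2 * (\<Sum>a=1..f * m. (-1) ^ a * \<chi> a * of_nat a ^ n)"
proof -
  define G where "G = 2 * euler_exp_sum \<chi> f / (fps_exp (of_nat f) + 1)"
  define F where "F = f * m"
  have E: "gen_euler f \<chi> i = fact i * G $ i" for i
    by (simp add: G_def gen_euler_eq_fps_nth)
  have "2 * (\<Sum>a=1..F. (-1) ^ a * \<chi> a * of_nat a ^ n) = fact n * (2 * euler_exp_sum \<chi> F) $ n"
    using fact_times_fps_nth_euler_exp_sum[of n \<chi> F] by (simp add: numeral_fps_const mult.left_commute)
  also have "\<dots> = fact n * (G * (fps_exp (of_nat F) + 1)) $ n"
    using gen_euler_fps_times_exp_plus_one[of \<chi> f m, OF assms] by (simp add: G_def F_def)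
  also have "\<dots> = fact n * (G * fps_exp (of_nat F)) $ n + gen_euler f \<chi> n"
    by (simp add: distrib_left E)
  also have "fact n * (G * fps_exp (of_nat F)) $ n
               = (\<Sum>i\<le>n. of_nat (n choose i) * of_nat F ^ (n - i) * gen_euler f \<chi> i)"
    by (simp add: fact_times_fps_nth_mult_exp E)
  also have "\<dots> = (\<Sum>i<n. of_nat (n choose i) * of_nat F ^ (n - i) * gen_euler f \<chi> i)
                   + gen_euler f \<chi> n"
    by (simp add: lessThan_Suc_atMost[symmetric])
  finally show ?thesis
    by (simp add: F_def algebra_simps)
qed

lemma euler_sum_minus_gen_euler:
  assumes "\<And>a. \<chi> (a + f) = \<chi> a" and "odd f" and "odd m"
  shows "(\<Sum>a=1..f * m. (-1) ^ a * \<chi> a * of_nat a ^ n) - gen_euler f \<chi> n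
         = of_nat (f * m)
           * (\<Sum>i<n. of_nat (n choose i) * of_nat (f * m) ^ (n - i - 1) * gen_euler f \<chi> i) / 2"
proof -
  have "(\<Sum>i<n. of_nat (n choose i) * of_nat (f * m) ^ (n - i) * gen_euler f \<chi> i)
        = of_nat (f * m) * (\<Sum>i<n. of_nat (n choose i) * of_nat (f * m) ^ (n - i - 1) * gen_euler f \<chi> i)"
    unfolding sum_distrib_left
  proof (rule sum.cong[OF refl])
    fix i assume "i \<in> {..<n}"
    then obtain j where "n - i = Suc j" and "n - i - 1 = j"
      by (metis Suc_diff_Suc diff_Suc_1 lessThan_iff)
    thus "of_nat (n choose i) * of_nat (f * m) ^ (n - i) * gen_euler f \<chi> i
          = of_nat (f * m) * (of_nat (n choose i) * of_nat (f * m) ^ (n - i - 1) * gen_euler f \<chi> i)"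
      by (simp add: mult_ac)
  qed
  with gen_euler_recurrence[of \<chi> f m n, OF assms] show ?thesis
    by (simp add: field_simps)
qed

section \<open>\<open>p\<close>-adic approximation\<close>

lemma p_local_poly_value_gen_euler:
  assumes "dirichlet_char f \<chi>" and "odd f" and "odd p"
  shows "p_local_poly_value p (cis (2 * pi / real (totient f))) (gen_euler f \<chi> n)"
proof (induction n rule: less_induct)
  case (less n)
  have sum_diff: "(\<Sum>a=1..f. (-1) ^ a * \<chi> a * of_nat a ^ n) - gen_euler f \<chi> n
          = of_nat f * (\<Sum>i<n. of_nat (n choose i) * of_nat f ^ (n - i - 1) * gen_euler f \<chi> i) / 2"
    using euler_sum_minus_gen_euler[of \<chi> f 1 n, OF dirichlet_char_periodic[OF assms(1)] assms(2)]
    by simp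
  hence "gen_euler f \<chi> n = (\<Sum>a=1..f. (-1) ^ a * \<chi> a * of_nat a ^ n)
          - of_nat f * (\<Sum>i<n. of_nat (n choose i) * of_nat f ^ (n - i - 1) * gen_euler f \<chi> i) / 2"
    unfolding sum_diff[symmetric] by simp
  also have "p_local_poly_value p (cis (2 * pi / real (totient f))) \<dots>"
    by (intro p_local_poly_value_diff p_local_poly_value_sum p_local_poly_value_mult
        p_local_poly_value_half[OF assms(3)] p_local_poly_value_power p_local_poly_value_uminus
        p_local_poly_value_of_nat p_local_poly_value_1 p_local_poly_value_dirichlet_char[OF assms(1)])
       (simp add: less)
  finally show ?case .
qed

lemma p_local_poly_value_euler_sum_diff_div:
  assumes "dirichlet_char f \<chi>" and "odd f" and "prime p" and "odd p" and "k \<le> N"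
  shows "p_local_poly_value p (cis (2 * pi / real (totient f)))
           (((\<Sum>a=1..f * p ^ N. (-1) ^ a * \<chi> a * of_nat a ^ n) - gen_euler f \<chi> n) / of_nat p ^ k)"
proof -
  let ?S = "\<Sum>a=1..f * p ^ N. (-1) ^ a * \<chi> a * of_nat a ^ n"
  let ?T = "\<Sum>i<n. of_nat (n choose i) * of_nat (f * p ^ N) ^ (n - i - 1) * gen_euler f \<chi> i"
  have diff: "?S - gen_euler f \<chi> n = of_nat (f * p ^ N) * ?T / 2"
    using euler_sum_minus_gen_euler[of \<chi> f "p ^ N" n, OF dirichlet_char_periodic[OF assms(1)] assms(2)]
      assms(4) by simp
  have "of_nat p ^ k * (of_nat (f * p ^ (N - k)) :: complex) = of_nat (f * p ^ N)"
    using assms(5) by (simp flip: power_add)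
  hence "(?S - gen_euler f \<chi> n) / of_nat p ^ k
           = (of_nat p ^ k * of_nat (f * p ^ (N - k)) * ?T / 2) / of_nat p ^ k"
    by (simp only: diff)
  also have "\<dots> = of_nat (f * p ^ (N - k)) * ?T / 2"
    using assms(3) by (simp add: prime_gt_0_nat)
  also have "p_local_poly_value p (cis (2 * pi / real (totient f))) \<dots>"
    by (intro p_local_poly_value_half[OF assms(4)] p_local_poly_value_mult p_local_poly_value_sum
        p_local_poly_value_power p_local_poly_value_gen_euler[OF assms(1,2,4)] p_local_poly_value_of_nat)
  finally show ?thesis .
qed

theorem lemma2p1:
  fixes p f n :: nat and \<chi> :: "nat \<Rightarrow> complex"
  assumes "prime p" and "odd p"
    and "primitive_dirichlet_char f \<chi>" and "odd f"
  shows "padic_tendsto p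
           (\<lambda>N. \<Sum>a=1..f * p ^ N. (-1) ^ a * \<chi> a * of_nat a ^ n)
           (gen_euler f \<chi> n)"
  unfolding padic_tendsto_def
proof (intro allI exI impI)
  fix k N :: nat assume "k \<le> N"
  have \<chi>: "dirichlet_char f \<chi>"
    using assms(3) unfolding primitive_dirichlet_char_def by blast
  have "totient f > 0" and "cis (2 * pi / real (totient f)) ^ totient f = 1"
    using \<chi> by (simp_all add: DeMoivre dirichlet_char_def)
  with p_local_poly_value_euler_sum_diff_div[OF \<chi> assms(4,1,2) \<open>k \<le> N\<close>]
  show "p_integral p (((\<Sum>a=1..f * p ^ N. (-1) ^ a * \<chi> a * of_nat a ^ n) - gen_euler f \<chi> n)
                       / of_nat p ^ k)"
    by (intro p_local_poly_value_imp_p_integral)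
qed

end
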